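(* For finite abstract simplicial complexes $G,H$, let $g=L_{G\times H}^{-1}$. Then $\sum_{X,Y\in G\times H}g(X,Y)=\chi(G\times H)$, where $\chi(G\times H)=\sum_{(x,y)\in G\times H}(-1)^{\dim(x)+\dim(y)}=\chi(G)\chi(H)$.
   Context: A finite abstract simplicial complex is a finite set of nonempty finite sets closed under taking nonempty subsets; $\dim(x)=|x|-1$ and $\chi(G)=\sum_{x\in G}(-1)^{\dim(x)}$. The connection matrix $L_G$ is indexed by elements of $G$, $L_G(x,y)=1$ if $x\cap y\neq\emptyset$, else $0$; it is known to be invertible (indeed unimodular). $G\times H$ is the set of pairs $(x,y)$, $x\in G$, $y\in H$, with connection matrix $L_{G\times H}((x,y),(a,b))=1$ if $x\cap a\ne\emptyset$ and $y\cap b\neq\emptyset$, else $0$; it equals the Kronecker product $L_G\otimes L_H$ and hence is invertible. *)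

theory Defs
  imports Complex_Main
begin

definition simplicial_complex :: "'a set set \<Rightarrow> bool" where
  "simplicial_complex G \<longleftrightarrow> finite G \<and> (\<forall>x\<in>G. finite x \<and> x \<noteq> {}) \<and>
     (\<forall>x\<in>G. \<forall>y. y \<subseteq> x \<and> y \<noteq> {} \<longrightarrow> y \<in> G)"

text \<open>dim x = |x| - 1 (elements of a complex are nonempty, so no truncation occurs)\<close>
definition sdim :: "'a set \<Rightarrow> nat" where
  "sdim x = card x - 1"

definition euler_char :: "'a set set \<Rightarrow> int" where
  "euler_char G = (\<Sum>x\<in>G. (-1) ^ sdim x)"

definition euler_char_prod :: "'a set set \<Rightarrow> 'b set set \<Rightarrow> int" where
  "euler_char_prod G H = (\<Sum>(x, y)\<in>G \<times> H. (-1) ^ (sdim x + sdim y))"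

definition connection_prod :: "('a set \<times> 'b set) \<Rightarrow> ('a set \<times> 'b set) \<Rightarrow> real" where
  "connection_prod X Y = (if fst X \<inter> fst Y \<noteq> {} \<and> snd X \<inter> snd Y \<noteq> {} then 1 else 0)"

definition is_inverse_on :: "'i set \<Rightarrow> ('i \<Rightarrow> 'i \<Rightarrow> real) \<Rightarrow> ('i \<Rightarrow> 'i \<Rightarrow> real) \<Rightarrow> bool" where
  "is_inverse_on S L g \<longleftrightarrow>
     (\<forall>X\<in>S. \<forall>Y\<in>S. (\<Sum>Z\<in>S. L X Z * g Z Y) = (if X = Y then 1 else 0)) \<and>
     (\<forall>X\<in>S. \<forall>Y\<in>S. (\<Sum>Z\<in>S. g X Z * L Z Y) = (if X = Y then 1 else 0))"

end

theory Submission imports Defs begin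

text \<open>
  Put \<open>w\<^sub>G(y) = (-1)\<^bsup>|y|\<^esup> \<Sum>\<^bsub>z \<in> G, y \<subseteq> z\<^esub> (-1)\<^bsup>|z|\<^esup>\<close>. The alternating sum over the subsets of a
  nonempty finite set vanishes; applied to the faces of \<open>z\<close> meeting \<open>x\<close> and to the
  faces of \<open>x\<close>, this gives \<open>L\<^sub>G w\<^sub>G = 1\<close>, and applied to the faces of each \<open>z\<close> it gives
  \<open>\<Sum> w\<^sub>G = \<chi>(G)\<close>. Since \<open>L\<^sub>G\<^sub>\<times>\<^sub>H = L\<^sub>G \<otimes> L\<^sub>H\<close>, the vector \<open>w = w\<^sub>G \<otimes> w\<^sub>H\<close> solves
  \<open>L\<^sub>G\<^sub>\<times>\<^sub>H w = 1\<close>, so \<open>g 1 = w\<close> and the sum of all entries of \<open>g\<close> is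
  \<open>\<Sum> w = \<chi>(G) \<chi>(H)\<close>.
\<close>

lemma sum_Pow_minus_one_power_card:
  assumes "finite z"
  shows "(\<Sum>y\<in>Pow z. (-1::'b::comm_ring_1) ^ card y) = (if z = {} then 1 else 0)"
proof -
  have "(\<Prod>x\<in>z. (1::'b) - 1) = (\<Sum>y\<in>Pow z. (-1) ^ card y * (\<Prod>x\<in>y. 1) * (\<Prod>x\<in>z - y. 1))"
    by (rule prod_diff_conv_sum[OF assms])
  then show ?thesis
    using assms by (cases "z = {}") (auto simp: power_0_left)
qed

lemma sum_nonempty_subsets_minus_one_power_card:
  assumes "finite z" and "z \<noteq> {}"
  shows "(\<Sum>y\<in>Pow z - {{}}. (-1::'b::comm_ring_1) ^ card y) = -1"
  using sum_Pow_minus_one_power_card[of z] assms by (simp add: sum_diff1)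

lemma sum_meeting_subsets_minus_one_power_card:
  assumes "finite z"
  shows "(\<Sum>y\<in>{y\<in>Pow z. x \<inter> y \<noteq> {}}. (-1::'b::comm_ring_1) ^ card y)
           = (if z = {} then 1 else 0) - (if z \<subseteq> x then 1 else 0)"
proof -
  let ?M = "{y\<in>Pow z. x \<inter> y \<noteq> {}}"
  have split: "?M \<union> Pow (z - x) = Pow z" and disjoint: "?M \<inter> Pow (z - x) = {}"
    by auto
  have "(\<Sum>y\<in>Pow z. (-1::'b) ^ card y)
      = (\<Sum>y\<in>?M. (-1) ^ card y) + (\<Sum>y\<in>Pow (z - x). (-1) ^ card y)"
    using sum.union_disjoint[OF _ _ disjoint, of "\<lambda>y. (-1::'b) ^ card y", unfolded split] assms
    by simp
  then show ?thesis
    using assms by (simp add: sum_Pow_minus_one_power_card)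
qed

lemma simplicial_complexD:
  assumes "simplicial_complex G"
  shows "finite G" and "x \<in> G \<Longrightarrow> finite x" and "x \<in> G \<Longrightarrow> x \<noteq> {}"
    and "x \<in> G \<Longrightarrow> y \<subseteq> x \<Longrightarrow> y \<noteq> {} \<Longrightarrow> y \<in> G"
  using assms unfolding simplicial_complex_def by blast+

lemma simplicial_complex_faces_of:
  assumes "simplicial_complex G" and "z \<in> G"
  shows "{y\<in>G. y \<subseteq> z} = Pow z - {{}}"
  using simplicial_complexD[OF assms(1)] assms(2) by auto

lemma minus_one_power_sdim:
  assumes "finite z" and "z \<noteq> {}"
  shows "(-1::'b::comm_ring_1) ^ sdim z = - ((-1) ^ card z)"
proof -
  have "card z = Suc (sdim z)"
    using assms by (simp add: sdim_def card_gt_0_iff)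
  then show ?thesis
    by simp
qed

text \<open>\<open>(-1)\<^bsup>dim y\<^esup>\<close> times the Euler characteristic of the star of \<open>y\<close>.\<close>
definition star_weight :: "'a set set \<Rightarrow> 'a set \<Rightarrow> real" where
  "star_weight G y = (\<Sum>z\<in>G. if y \<subseteq> z then (-1) ^ card z * (-1) ^ card y else 0)"

lemma connection_sum_star_weight:
  assumes G: "simplicial_complex G" and x: "x \<in> G"
  shows "(\<Sum>y\<in>G. (if x \<inter> y \<noteq> {} then 1 else 0) * star_weight G y) = 1"
proof -
  have fin: "finite G"
    using simplicial_complexD(1)[OF G] .
  have inner: "(\<Sum>y\<in>G. if x \<inter> y \<noteq> {} \<and> y \<subseteq> z then (-1) ^ card y else 0)
      = (if z \<subseteq> x then -1 else (0::real))" if z: "z \<in> G" for z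
  proof -
    have "(\<Sum>y\<in>G. if x \<inter> y \<noteq> {} \<and> y \<subseteq> z then (-1) ^ card y else 0)
        = (\<Sum>y\<in>{y\<in>G. x \<inter> y \<noteq> {} \<and> y \<subseteq> z}. (-1::real) ^ card y)"
      using fin by (simp add: sum.inter_filter)
    also have "{y\<in>G. x \<inter> y \<noteq> {} \<and> y \<subseteq> z} = {y\<in>Pow z. x \<inter> y \<noteq> {}}"
      using simplicial_complex_faces_of[OF G z] by auto
    also have "(\<Sum>y\<in>{y\<in>Pow z. x \<inter> y \<noteq> {}}. (-1::real) ^ card y) = (if z \<subseteq> x then -1 else 0)"
      using simplicial_complexD[OF G] z by (subst sum_meeting_subsets_minus_one_power_card) auto
    finally show ?thesis .
  qed
  have "(\<Sum>y\<in>G. (if x \<inter> y \<noteq> {} then 1 else 0) * star_weight G y)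
      = (\<Sum>z\<in>G. (-1) ^ card z * (\<Sum>y\<in>G. if x \<inter> y \<noteq> {} \<and> y \<subseteq> z then (-1) ^ card y else 0))"
    unfolding star_weight_def sum_distrib_left
    by (subst sum.swap) (auto intro!: sum.cong)
  also have "\<dots> = - (\<Sum>z\<in>{z\<in>G. z \<subseteq> x}. (-1) ^ card z)"
    using fin by (auto simp: inner sum.inter_filter simp flip: sum_negf intro!: sum.cong)
  also have "{z\<in>G. z \<subseteq> x} = Pow x - {{}}"
    by (rule simplicial_complex_faces_of[OF G x])
  also have "- (\<Sum>z\<in>Pow x - {{}}. (-1::real) ^ card z) = 1"
    using simplicial_complexD[OF G] x by (simp add: sum_nonempty_subsets_minus_one_power_card)
  finally show ?thesis .
qed

lemma sum_star_weight:
  assumes G: "simplicial_complex G"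
  shows "(\<Sum>y\<in>G. star_weight G y) = real_of_int (euler_char G)"
proof -
  have inner: "(\<Sum>y\<in>G. if y \<subseteq> z then (-1) ^ card z * (-1) ^ card y else 0) = (-1::real) ^ sdim z"
    if z: "z \<in> G" for z
  proof -
    have "(\<Sum>y\<in>G. if y \<subseteq> z then (-1) ^ card z * (-1::real) ^ card y else 0)
        = (-1) ^ card z * (\<Sum>y\<in>{y\<in>G. y \<subseteq> z}. (-1) ^ card y)"
      using simplicial_complexD(1)[OF G] by (auto simp: sum.inter_filter sum_distrib_left intro!: sum.cong)
    also have "\<dots> = (-1) ^ sdim z"
      using simplicial_complexD[OF G] z
      by (simp add: simplicial_complex_faces_of[OF G z] sum_nonempty_subsets_minus_one_power_card
          minus_one_power_sdim)
    finally show ?thesis .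
  qed
  show ?thesis
    unfolding star_weight_def euler_char_def
    by (subst sum.swap) (simp add: inner)
qed

lemma sum_left_inverse_entries:
  fixes L g :: "'i \<Rightarrow> 'i \<Rightarrow> 'a::comm_ring_1"
  assumes "finite S"
    and left_inverse: "\<And>X Y. X \<in> S \<Longrightarrow> Y \<in> S \<Longrightarrow> (\<Sum>Z\<in>S. g X Z * L Z Y) = (if X = Y then 1 else 0)"
    and solution: "\<And>Y. Y \<in> S \<Longrightarrow> (\<Sum>Z\<in>S. L Y Z * w Z) = 1"
  shows "(\<Sum>X\<in>S. \<Sum>Y\<in>S. g X Y) = (\<Sum>X\<in>S. w X)"
proof -
  have row: "(\<Sum>Y\<in>S. g X Y) = (\<Sum>Z\<in>S. (\<Sum>Y\<in>S. g X Y * L Y Z) * w Z)" for X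
  proof -
    have "(\<Sum>Y\<in>S. g X Y) = (\<Sum>Y\<in>S. \<Sum>Z\<in>S. g X Y * (L Y Z * w Z))"
      by (simp add: solution flip: sum_distrib_left)
    also have "\<dots> = (\<Sum>Z\<in>S. (\<Sum>Y\<in>S. g X Y * L Y Z) * w Z)"
      by (subst sum.swap) (simp add: sum_distrib_right mult.assoc)
    finally show ?thesis .
  qed
  have "(\<Sum>X\<in>S. \<Sum>Y\<in>S. g X Y) = (\<Sum>X\<in>S. \<Sum>Z\<in>S. (\<Sum>Y\<in>S. g X Y * L Y Z) * w Z)"
    by (simp only: row)
  also have "\<dots> = (\<Sum>X\<in>S. w X)"
    using \<open>finite S\<close> by (simp add: left_inverse if_distrib[of "\<lambda>c. c * w _"] cong: if_cong)
  finally show ?thesis .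
qed

lemma connection_prod_sum_star_weight:
  assumes G: "simplicial_complex G" and H: "simplicial_complex H" and Y: "Y \<in> G \<times> H"
  shows "(\<Sum>Z\<in>G \<times> H. connection_prod Y Z * (star_weight G (fst Z) * star_weight H (snd Z))) = 1"
proof -
  obtain a b where ab: "Y = (a, b)" "a \<in> G" "b \<in> H"
    using Y by blast
  have "(\<Sum>Z\<in>G \<times> H. connection_prod Y Z * (star_weight G (fst Z) * star_weight H (snd Z)))
      = (\<Sum>x\<in>G. (if a \<inter> x \<noteq> {} then 1 else 0) * star_weight G x)
        * (\<Sum>y\<in>H. (if b \<inter> y \<noteq> {} then 1 else 0) * star_weight H y)"
    unfolding sum_product sum.cartesian_product ab(1)
    by (intro sum.cong refl) (clarsimp simp: connection_prod_def)
  then show ?thesis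
    using connection_sum_star_weight[OF G ab(2)] connection_sum_star_weight[OF H ab(3)] by simp
qed

lemma euler_char_prod_eq_mult: "euler_char_prod G H = euler_char G * euler_char H"
  unfolding euler_char_prod_def euler_char_def
  by (simp add: sum.cartesian_product[symmetric] sum_product power_add)

theorem mainTheorem14:
  fixes G :: "'a set set" and H :: "'b set set"
    and g :: "('a set \<times> 'b set) \<Rightarrow> ('a set \<times> 'b set) \<Rightarrow> real"
  assumes "simplicial_complex G" and "simplicial_complex H"
    and "is_inverse_on (G \<times> H) connection_prod g"
  shows "(\<Sum>X\<in>G \<times> H. \<Sum>Y\<in>G \<times> H. g X Y) = real_of_int (euler_char_prod G H)
     \<and> euler_char_prod G H = euler_char G * euler_char H"
proof -
  have left_inverse: "\<And>X Y. X \<in> G \<times> H \<Longrightarrow> Y \<in> G \<times> H \<Longrightarrow>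
      (\<Sum>Z\<in>G \<times> H. g X Z * connection_prod Z Y) = (if X = Y then 1 else 0)"
    using assms(3) unfolding is_inverse_on_def by blast
  have "(\<Sum>X\<in>G \<times> H. \<Sum>Y\<in>G \<times> H. g X Y)
      = (\<Sum>X\<in>G \<times> H. star_weight G (fst X) * star_weight H (snd X))"
    using simplicial_complexD(1)[OF assms(1)] simplicial_complexD(1)[OF assms(2)]
    by (intro sum_left_inverse_entries[OF _ left_inverse]
        connection_prod_sum_star_weight[OF assms(1,2)]) simp_all
  also have "\<dots> = (\<Sum>x\<in>G. star_weight G x) * (\<Sum>y\<in>H. star_weight H y)"
    by (simp add: sum_product sum.cartesian_product case_prod_beta)
  also have "\<dots> = real_of_int (euler_char_prod G H)"
    by (simp add: sum_star_weight assms euler_char_prod_eq_mult)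
  finally show ?thesis
    using euler_char_prod_eq_mult by blast
qed

end
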